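(* Let $\mathcal{X}$ and $\mathcal{Y}$ be finite subsets of $\mathbb{R}$, each with $N$ elements. Let $S$ be a binary random variable with values $s_0,s_1$, each with positive probability, and $X$ a random variable with values in $\mathcal{X}$ with $P^X_i=\mathbb{P}(X=i)>0$ for all $i\in\mathcal{X}$; let $P^{X_s}_i=\mathbb{P}(X=i\mid S=s)$. Let $P^{\tilde X}\in\mathbb{R}^{\mathcal{Y}}$ be a probability vector, $\gamma\in\Pi(P^X,P^{\tilde X})$, and let $\tilde X$ be the projected variable defined by: conditionally on $(X,S)=(i,s)$, $\tilde X=j$ with probability $\gamma_{i,j}/P^X_i$; write $P^{\tilde X_s}_j=\mathbb{P}(\tilde X=j\mid S=s)$. Let $V=(P^{X_{s_0}}-P^{X_{s_1}})/P^X$ (element-wise) and $\overline{\mathcal{X}}=\{i\in\mathcal{X}: V_i\neq 0\}$. Suppose $\Lambda\in\mathbb{R}^{\mathcal{Y}}_+$ satisfies $$-\Lambda_j\le \sum_{i\in\overline{\mathcal{X}}}\gamma_{i,j}V_i\le\Lambda_j\quad\text{for all } j\in\mathcal{Y}.$$ Then $\|\gamma'V\|_1\le\|\Lambda\|_1$ and $$\operatorname{TV}\big(P^{\tilde X_{s_0}},P^{\tilde X_{s_1}}\big)=\frac{\|\gamma'V\|_1}{2}\le\frac{\|\Lambda\|_1}{2}.$$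
   Context: $\Pi(P,Q)=\{\gamma\in\mathbb{R}_+^{\mathcal{X}\times\mathcal{Y}}:\gamma\mathbb{1}=P,\ \gamma'\mathbb{1}=Q\}$. For probability vectors $P,Q$ on $\mathcal{Y}$, the total variation distance is $\operatorname{TV}(P,Q)=\frac12\sum_{j\in\mathcal{Y}}|P_j-Q_j|=\frac12\|P-Q\|_1$. *)

theory Defs
  imports Complex_Main
begin

text \<open>Discrete setting. The joint law of (S,X) is given by pSX s i = P(S=s, X=i),
  with S binary (values True = s0, False = s1) and X valued in the finite set Xs.\<close>

definition l1norm :: "'a set \<Rightarrow> ('a \<Rightarrow> real) \<Rightarrow> real" where
  "l1norm A f = (\<Sum>x\<in>A. \<bar>f x\<bar>)"

definition TV :: "'a set \<Rightarrow> ('a \<Rightarrow> real) \<Rightarrow> ('a \<Rightarrow> real) \<Rightarrow> real" where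
  "TV A P Q = (1/2) * (\<Sum>j\<in>A. \<bar>P j - Q j\<bar>)"

definition probS :: "real set \<Rightarrow> (bool \<Rightarrow> real \<Rightarrow> real) \<Rightarrow> bool \<Rightarrow> real" where
  "probS Xs pSX s = (\<Sum>i\<in>Xs. pSX s i)"

definition margX :: "(bool \<Rightarrow> real \<Rightarrow> real) \<Rightarrow> real \<Rightarrow> real" where
  "margX pSX i = pSX True i + pSX False i"

definition condX :: "real set \<Rightarrow> (bool \<Rightarrow> real \<Rightarrow> real) \<Rightarrow> bool \<Rightarrow> real \<Rightarrow> real" where
  "condX Xs pSX s i = pSX s i / probS Xs pSX s"

text \<open>P^{\tilde X_s}_j = P(\tilde X = j | S = s), where conditionally on (X,S)=(i,s),
  \tilde X = j with probability gamma i j / P^X_i.\<close>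
definition condXt :: "real set \<Rightarrow> (bool \<Rightarrow> real \<Rightarrow> real) \<Rightarrow> (real \<Rightarrow> real \<Rightarrow> real)
    \<Rightarrow> bool \<Rightarrow> real \<Rightarrow> real" where
  "condXt Xs pSX \<gamma> s j = (\<Sum>i\<in>Xs. condX Xs pSX s i * (\<gamma> i j / margX pSX i))"

definition Vvec :: "real set \<Rightarrow> (bool \<Rightarrow> real \<Rightarrow> real) \<Rightarrow> real \<Rightarrow> real" where
  "Vvec Xs pSX i = (condX Xs pSX True i - condX Xs pSX False i) / margX pSX i"

definition couplings :: "real set \<Rightarrow> real set \<Rightarrow> (real \<Rightarrow> real) \<Rightarrow> (real \<Rightarrow> real)
    \<Rightarrow> (real \<Rightarrow> real \<Rightarrow> real) set" where
  "couplings Xs Ys P Q = {\<gamma>. (\<forall>i\<in>Xs. \<forall>j\<in>Ys. \<gamma> i j \<ge> 0)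
      \<and> (\<forall>i\<in>Xs. (\<Sum>j\<in>Ys. \<gamma> i j) = P i) \<and> (\<forall>j\<in>Ys. (\<Sum>i\<in>Xs. \<gamma> i j) = Q j)}"

end

theory Submission
  imports Defs
begin

text \<open>Conditioning on S and pushing X through the kernel i \<mapsto> \<gamma> i \<cdot> / P^X_i is linear, so
  P^{\tilde X_{s0}} - P^{\tilde X_{s1}} = \<gamma>'V, and the total variation distance is half its
  l1-norm. Coordinates i with V_i = 0 do not contribute to \<gamma>'V, hence the hypothesis on \<Lambda>
  says |(\<gamma>'V)_j| \<le> \<Lambda>_j, and summing over j gives the bound.\<close>

lemma TV_eq_l1norm_diff: "TV A P Q = l1norm A (\<lambda>j. P j - Q j) / 2"
  unfolding TV_def l1norm_def by simp

lemma l1norm_le_if_abs_le: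
  assumes "\<And>j. j \<in> A \<Longrightarrow> \<bar>f j\<bar> \<le> g j"
  shows "l1norm A f \<le> l1norm A g"
  unfolding l1norm_def
proof (rule sum_mono)
  fix j assume "j \<in> A"
  with assms show "\<bar>f j\<bar> \<le> \<bar>g j\<bar>" by fastforce
qed

lemma sum_over_nonzero_factor:
  fixes f V :: "'a \<Rightarrow> 'b::semiring_0"
  assumes "finite A"
  shows "(\<Sum>i\<in>{i\<in>A. V i \<noteq> 0}. f i * V i) = (\<Sum>i\<in>A. f i * V i)"
  by (rule sum.mono_neutral_left) (use assms in auto)

text \<open>No positivity of P^X is needed: with x / 0 = 0 both sides vanish termwise.\<close>
lemma condXt_diff_eq_transport_Vvec:
  "condXt Xs pSX \<gamma> True j - condXt Xs pSX \<gamma> False j = (\<Sum>i\<in>Xs. \<gamma> i j * Vvec Xs pSX i)"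
  unfolding condXt_def Vvec_def sum_subtractf[symmetric]
  by (rule sum.cong) (simp_all add: divide_inverse algebra_simps)

theorem mainTheorem3:
  fixes Xs Ys :: "real set" and N :: nat
    and pSX :: "bool \<Rightarrow> real \<Rightarrow> real"
    and Pt :: "real \<Rightarrow> real"
    and \<gamma> :: "real \<Rightarrow> real \<Rightarrow> real"
    and \<Lambda> :: "real \<Rightarrow> real"
  assumes "finite Xs" and "finite Ys" and "card Xs = N" and "card Ys = N"
    and joint_nonneg: "\<forall>s. \<forall>i\<in>Xs. pSX s i \<ge> 0"
    and joint_sum: "(\<Sum>s\<in>UNIV. \<Sum>i\<in>Xs. pSX s i) = 1"
    and S_pos: "\<forall>s. probS Xs pSX s > 0"
    and X_pos: "\<forall>i\<in>Xs. margX pSX i > 0"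
    and Pt_nonneg: "\<forall>j\<in>Ys. Pt j \<ge> 0" and Pt_sum: "(\<Sum>j\<in>Ys. Pt j) = 1"
    and gamma: "\<gamma> \<in> couplings Xs Ys (margX pSX) Pt"
    and Lam_nonneg: "\<forall>j\<in>Ys. \<Lambda> j \<ge> 0"
    and Lam_bound: "\<forall>j\<in>Ys.
        - \<Lambda> j \<le> (\<Sum>i\<in>{i\<in>Xs. Vvec Xs pSX i \<noteq> 0}. \<gamma> i j * Vvec Xs pSX i)
        \<and> (\<Sum>i\<in>{i\<in>Xs. Vvec Xs pSX i \<noteq> 0}. \<gamma> i j * Vvec Xs pSX i) \<le> \<Lambda> j"
  shows "l1norm Ys (\<lambda>j. \<Sum>i\<in>Xs. \<gamma> i j * Vvec Xs pSX i) \<le> l1norm Ys \<Lambda>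
    \<and> TV Ys (condXt Xs pSX \<gamma> True) (condXt Xs pSX \<gamma> False)
        = l1norm Ys (\<lambda>j. \<Sum>i\<in>Xs. \<gamma> i j * Vvec Xs pSX i) / 2
    \<and> l1norm Ys (\<lambda>j. \<Sum>i\<in>Xs. \<gamma> i j * Vvec Xs pSX i) / 2 \<le> l1norm Ys \<Lambda> / 2"
proof -
  let ?\<gamma>V = "\<lambda>j. \<Sum>i\<in>Xs. \<gamma> i j * Vvec Xs pSX i"
  have "\<bar>?\<gamma>V j\<bar> \<le> \<Lambda> j" if "j \<in> Ys" for j
    using Lam_bound[rule_format, OF that]
    unfolding sum_over_nonzero_factor[OF \<open>finite Xs\<close>] by linarith
  then have l1_bound: "l1norm Ys ?\<gamma>V \<le> l1norm Ys \<Lambda>"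
    by (rule l1norm_le_if_abs_le)
  have "TV Ys (condXt Xs pSX \<gamma> True) (condXt Xs pSX \<gamma> False) = l1norm Ys ?\<gamma>V / 2"
    unfolding TV_eq_l1norm_diff condXt_diff_eq_transport_Vvec ..
  with l1_bound show ?thesis by simp
qed

end
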